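(* Let $\gamma$ be a smooth curve in the affine plane with strictly positive equi-affine curvature $\kappa$, and let $\mathscr{P}_\gamma$ be its osculating parabolic congruence, a curve in $(\mathrm{SL}(2),g)$. Then the full-affine arc-length of $\gamma$, $\int\sqrt{\kappa}\,\mathrm{d}s$, equals the pseudo-Riemannian arc-length $\int\sqrt{|g(\dot{\mathscr{P}}_\gamma,\dot{\mathscr{P}}_\gamma)|}\,\mathrm{d}t$ of $\mathscr{P}_\gamma$ (over corresponding parameter intervals).
   Context: The affine plane is $\mathbb{R}^2$ with area form $|u,v|=\det(u,v)$. For a nondegenerate curve parametrised by equi-affine arc-length $s$ (i.e. $|\gamma',\gamma''|=1$), $T=\gamma'$, $N=\gamma''$, and the equi-affine curvature $\kappa$ is defined by $\gamma'''=-\kappa\gamma'$; the full-affine arc-length element is $\mathrm{d}s_{\mathbf F}=\sqrt{\kappa}\,\mathrm{d}s$ (for $\kappa>0$). The osculating parabola of $\gamma$ at $\gamma(s_0)$ is the parabola $u\mapsto\gamma(s_0)+u\,T(s_0)+\tfrac{u^2}{2}N(s_0)$. A pointed parabola is a parabola together with a distinguished point on it; any two pointed parabolas are related by a unique orientation-preserving equi-affine transformation $p\mapsto Lp+b$ ($L\in\mathrm{SL}(2)$) mapping one to the other and distinguished point to distinguished point. Fix a standard pointed parabola. For an arbitrarily (regularly) parametrised curve $t\mapsto\gamma(t)$, let $\Phi(t)$ be the orientation-preserving equi-affine transformation carrying the standard pointed parabola to the osculating parabola of $\gamma$ at $\gamma(t)$ with distinguished point $\gamma(t)$; the osculating parabolic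 congruence is $\mathscr{P}_\gamma(t)=$ the linear part of $\Phi(t)$, an element of $\mathrm{SL}(2)$. The group $\mathrm{SL}(2)\subset\mathbb{R}^{2\times2}$ carries the bi-invariant Lorentzian metric $g(v_P,v_P)=-\det(v_P)$ for $v_P\in T_P\mathrm{SL}(2)\subseteq\mathbb{R}^{2\times2}$. *)

theory Defs
  imports "HOL-Analysis.Analysis"
begin

definition area :: "real^2 \<Rightarrow> real^2 \<Rightarrow> real" where
  "area u v = u$1 * v$2 - u$2 * v$1"

definition vderiv :: "real set \<Rightarrow> (real \<Rightarrow> 'a::real_normed_vector) \<Rightarrow> real \<Rightarrow> 'a" where
  "vderiv S f = (\<lambda>t. vector_derivative f (at t within S))"

definition smooth_on :: "real set \<Rightarrow> (real \<Rightarrow> 'a::real_normed_vector) \<Rightarrow> bool" where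
  "smooth_on S f \<longleftrightarrow> (\<forall>k. \<forall>t\<in>S. ((vderiv S ^^ k) f) differentiable (at t within S))"

definition std_parabola :: "(real^2) set" where
  "std_parabola = {p. p$2 = (p$1)^2 / 2}"

definition std_point :: "real^2" where
  "std_point = 0"

text \<open>Osculating parabola of an equi-affinely arc-length parametrised curve c at c(s):
  u \<mapsto> c(s) + u T(s) + u^2/2 N(s), with T = c', N = c''.\<close>
definition osc_parabola :: "real set \<Rightarrow> (real \<Rightarrow> real^2) \<Rightarrow> real \<Rightarrow> (real^2) set" where
  "osc_parabola S c s =
     range (\<lambda>u. c s + u *\<^sub>R vderiv S c s + (u^2 / 2) *\<^sub>R (vderiv S ^^ 2) c s)"

definition osc_congr :: "real set \<Rightarrow> (real \<Rightarrow> real^2) \<Rightarrow> real \<Rightarrow> real^2^2" where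
  "osc_congr S c s = (THE L. det L = 1 \<and>
      (\<exists>b. (\<lambda>p. L *v p + b) ` std_parabola = osc_parabola S c s \<and> L *v std_point + b = c s))"

definition gSL :: "real^2^2 \<Rightarrow> real" where
  "gSL v = - det v"

end

theory Submission
  imports Defs
begin

text \<open>For a curve in equi-affine arc length with frame (T, N), the osculating parabolic
congruence is the matrix with columns T and N: an equi-affine map sending the standard
parabola onto the osculating one, with 0 going to c(s), must in the frame (T, N) map each point
(x, x^2/2) to a point (u, u^2/2), which forces its linear part to be [T N]. Differentiating,
T' = N and N' = -\<kappa> T, so the derivative of [T N] is [N, -\<kappa> T] with determinant \<kappa>.
After reparametrising by \<phi>, g(P', P') = -\<phi>'^2 \<kappa>(\<phi>), whose square root
|\<phi>'| \<surd>\<kappa>(\<phi>) integrates to the full-affine length by the substitution rule, as a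
regular reparametrisation of an interval is monotone.\<close>

definition col_matrix :: "real^2 \<Rightarrow> real^2 \<Rightarrow> real^2^2" where
  "col_matrix v w = (\<chi> i j. if j = 1 then v$i else w$i)"

lemma col_matrix_mult_vec: "col_matrix v w *v p = p$1 *\<^sub>R v + p$2 *\<^sub>R w"
  by (simp add: vec_eq_iff col_matrix_def matrix_vector_mult_def sum_2 forall_2 mult.commute)

lemma det_col_matrix: "det (col_matrix v w) = area v w"
  by (simp add: det_2 col_matrix_def area_def)

lemma col_matrix_scaleR: "col_matrix (a *\<^sub>R v) (a *\<^sub>R w) = a *\<^sub>R col_matrix v w"
  by (simp add: vec_eq_iff col_matrix_def forall_2)

lemma col_matrix_of_columns: "L = col_matrix (\<chi> i. L$i$1) (\<chi> i. L$i$2)"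
  by (simp add: vec_eq_iff col_matrix_def forall_2)

lemma has_vector_derivative_col_matrix:
  assumes "(f has_vector_derivative f') F" and "(g has_vector_derivative g') F"
  shows "((\<lambda>x. col_matrix (f x) (g x)) has_vector_derivative col_matrix f' g') F"
proof -
  have split: "col_matrix v w = col_matrix v 0 + col_matrix 0 w" for v w
    by (simp add: vec_eq_iff col_matrix_def forall_2)
  have "bounded_linear (\<lambda>v. col_matrix v 0)" "bounded_linear (\<lambda>w. col_matrix 0 w)"
    by (auto simp: linear_conv_bounded_linear[symmetric] vec_eq_iff col_matrix_def forall_2
        intro!: linearI)
  then show ?thesis
    by (subst (1 2) split) (intro has_vector_derivative_add assms
        bounded_linear.has_vector_derivative[where f = "\<lambda>v. col_matrix v 0"]
        bounded_linear.has_vector_derivative[where f = "\<lambda>w. col_matrix 0 w"])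
qed

lemma frame_coords_iff:
  assumes "area T N = 1"
  shows "v = u *\<^sub>R T + w *\<^sub>R N \<longleftrightarrow> u = area v N \<and> w = area T v"
proof
  assume "v = u *\<^sub>R T + w *\<^sub>R N"
  then show "u = area v N \<and> w = area T v"
    using assms by (simp add: area_def algebra_simps)
next
  assume "u = area v N \<and> w = area T v"
  then have "v$1 = u * T$1 + w * N$1 \<and> v$2 = u * T$2 + w * N$2"
    using assms unfolding area_def by algebra
  then show "v = u *\<^sub>R T + w *\<^sub>R N"
    by (simp add: vec_eq_iff forall_2)
qed

lemma quadratic_map_onto_parabola_coeffs:
  fixes \<alpha> \<beta> \<gamma> \<delta> :: real
  assumes "\<And>x. (x * \<alpha> + x^2/2 * \<gamma>)^2 / 2 = x * \<beta> + x^2/2 * \<delta>"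
  shows "\<gamma> = 0" and "\<beta> = 0" and "\<delta> = \<alpha>^2"
proof -
  have "(2*\<alpha> + \<gamma>)^2 = 8*\<beta> + 4*\<delta>" "(2*\<alpha> - \<gamma>)^2 = 4*\<delta> - 8*\<beta>"
       "(\<alpha> + \<gamma>)^2 = \<beta> + \<delta>" "(\<alpha> - \<gamma>)^2 = \<delta> - \<beta>"
    using assms[of 1] assms[of "-1"] assms[of 2] assms[of "-2"]
    by (simp_all add: power2_eq_square field_simps)
  then have "\<gamma>^2 = 0 \<and> \<beta> = 0 \<and> \<delta> = \<alpha>^2"
    by algebra
  then show "\<gamma> = 0" "\<beta> = 0" "\<delta> = \<alpha>^2" by simp_all
qed

lemma area_linear_combination:
  "area (x *\<^sub>R a + y *\<^sub>R d) N = x * area a N + y * area d N"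
  "area T (x *\<^sub>R a + y *\<^sub>R d) = x * area T a + y * area T d"
  by (simp_all add: area_def algebra_simps)

lemma col_matrix_image_std_parabola:
  "(\<lambda>p. col_matrix T N *v p + c0) ` std_parabola = range (\<lambda>u. c0 + u *\<^sub>R T + (u^2/2) *\<^sub>R N)"
proof -
  have std: "std_parabola = range (\<lambda>u. vector [u, u^2/2])"
    by (auto simp: std_parabola_def vec_eq_iff forall_2 intro!: image_eqI[where x = "_$1"])
  show ?thesis
    unfolding std image_image by (simp add: col_matrix_mult_vec algebra_simps)
qed

lemma equiaffine_map_onto_parabola_unique:
  fixes T N b c0 :: "real^2" and L :: "real^2^2"
  assumes TN: "area T N = 1" and det: "det L = 1"
    and onto: "(\<lambda>p. L *v p + b) ` std_parabola \<subseteq> range (\<lambda>u. c0 + u *\<^sub>R T + (u^2/2) *\<^sub>R N)"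
    and point: "L *v std_point + b = c0"
  shows "L = col_matrix T N"
proof -
  define a d where "a = (\<chi> i. L$i$1)" and "d = (\<chi> i. L$i$2)"
  have L: "L = col_matrix a d" unfolding a_def d_def by (rule col_matrix_of_columns)
  have "b = c0" using point by (simp add: std_point_def)
  have coeffs: "(x * area a N + x^2/2 * area d N)^2 / 2 = x * area T a + x^2/2 * area T d" for x
  proof -
    have "vector [x, x^2/2] \<in> std_parabola" by (simp add: std_parabola_def)
    then obtain u where "x *\<^sub>R a + (x^2/2) *\<^sub>R d = u *\<^sub>R T + (u^2/2) *\<^sub>R N"
      using onto by (force simp: L col_matrix_mult_vec \<open>b = c0\<close>)
    then show ?thesis
      by (auto simp: frame_coords_iff[OF TN] area_linear_combination)
  qed
  note coeffs = quadratic_map_onto_parabola_coeffs[OF coeffs]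
  define \<alpha> where "\<alpha> = area a N"
  have a: "a = \<alpha> *\<^sub>R T" and d: "d = \<alpha>^2 *\<^sub>R N"
    using frame_coords_iff[OF TN, of a \<alpha> 0] frame_coords_iff[OF TN, of d 0 "\<alpha>^2"] coeffs
    by (simp_all add: \<alpha>_def)
  have "\<alpha>^3 = 1"
    using det TN by (simp add: L a d det_col_matrix area_def power3_eq_cube power2_eq_square algebra_simps)
  then have "\<alpha> = 1"
    using odd_real_root_power_cancel[of 3 \<alpha>] by simp
  then show ?thesis by (simp add: L a d)
qed

lemma osc_congr_eq_col_matrix:
  assumes "area (vderiv S c s) ((vderiv S ^^ 2) c s) = 1"
  shows "osc_congr S c s = col_matrix (vderiv S c s) ((vderiv S ^^ 2) c s)"
  unfolding osc_congr_def
proof (rule the_equality)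
  show "det (col_matrix (vderiv S c s) ((vderiv S ^^ 2) c s)) = 1 \<and>
    (\<exists>b. (\<lambda>p. col_matrix (vderiv S c s) ((vderiv S ^^ 2) c s) *v p + b) ` std_parabola
           = osc_parabola S c s \<and>
         col_matrix (vderiv S c s) ((vderiv S ^^ 2) c s) *v std_point + b = c s)"
    using assms by (auto simp: det_col_matrix osc_parabola_def col_matrix_image_std_parabola
        std_point_def intro!: exI[of _ "c s"])
next
  fix L assume "det L = 1 \<and> (\<exists>b. (\<lambda>p. L *v p + b) ` std_parabola = osc_parabola S c s \<and>
                                   L *v std_point + b = c s)"
  then show "L = col_matrix (vderiv S c s) ((vderiv S ^^ 2) c s)"
    using equiaffine_map_onto_parabola_unique[OF assms] unfolding osc_parabola_def by blast
qed

lemma smooth_on_has_vector_derivative: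
  assumes "smooth_on S f" and "t \<in> S"
  shows "((vderiv S ^^ k) f has_vector_derivative (vderiv S ^^ Suc k) f t) (at t within S)"
  using assms by (simp add: smooth_on_def vderiv_def vector_derivative_works)

lemma smooth_on_continuous_on:
  assumes "smooth_on S f"
  shows "continuous_on S ((vderiv S ^^ k) f)"
  using assms unfolding smooth_on_def
  by (simp add: continuous_on_eq_continuous_within differentiable_imp_continuous_within)

lemma equiaffine_curvature_continuous_on:
  assumes "smooth_on S c"
    and "\<forall>s\<in>S. area (vderiv S c s) ((vderiv S ^^ 2) c s) = 1"
    and "\<forall>s\<in>S. (vderiv S ^^ 3) c s = - (\<kappa> s *\<^sub>R vderiv S c s)"
  shows "continuous_on S \<kappa>"
proof -
  have "\<kappa> s = area ((vderiv S ^^ 2) c s) ((vderiv S ^^ 3) c s)" if "s \<in> S" for s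
    using assms(2,3) that by (simp add: area_def algebra_simps)
  moreover have "continuous_on S (\<lambda>s. area ((vderiv S ^^ 2) c s) ((vderiv S ^^ 3) c s))"
    unfolding area_def by (intro continuous_intros smooth_on_continuous_on assms(1))
  ultimately show ?thesis by (simp add: continuous_on_eq)
qed

lemma osc_congr_has_vector_derivative:
  assumes smooth: "smooth_on S c"
    and frame: "\<forall>s\<in>S. area (vderiv S c s) ((vderiv S ^^ 2) c s) = 1"
    and curvature: "\<forall>s\<in>S. (vderiv S ^^ 3) c s = - (\<kappa> s *\<^sub>R vderiv S c s)"
    and "s \<in> S"
  shows "(osc_congr S c has_vector_derivative
           col_matrix ((vderiv S ^^ 2) c s) (- (\<kappa> s *\<^sub>R vderiv S c s))) (at s within S)"
proof (rule has_vector_derivative_transform[OF \<open>s \<in> S\<close>])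
  show "osc_congr S c s' = col_matrix ((vderiv S ^^ 1) c s') ((vderiv S ^^ 2) c s')" if "s' \<in> S" for s'
    using osc_congr_eq_col_matrix frame that by simp
  show "((\<lambda>s'. col_matrix ((vderiv S ^^ 1) c s') ((vderiv S ^^ 2) c s')) has_vector_derivative
           col_matrix ((vderiv S ^^ 2) c s) (- (\<kappa> s *\<^sub>R vderiv S c s))) (at s within S)"
    using has_vector_derivative_col_matrix[OF
        smooth_on_has_vector_derivative[OF smooth \<open>s \<in> S\<close>, of 1]
        smooth_on_has_vector_derivative[OF smooth \<open>s \<in> S\<close>, of 2]]
      curvature \<open>s \<in> S\<close> by (simp add: numeral_2_eq_2 numeral_3_eq_3)
qed

lemma gSL_osc_congr_reparametrised:
  assumes smooth: "smooth_on S c"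
    and frame: "\<forall>s\<in>S. area (vderiv S c s) ((vderiv S ^^ 2) c s) = 1"
    and curvature: "\<forall>s\<in>S. (vderiv S ^^ 3) c s = - (\<kappa> s *\<^sub>R vderiv S c s)"
    and "t0 < t1" and \<phi>_smooth: "smooth_on {t0..t1} \<phi>" and \<phi>_into: "\<phi> ` {t0..t1} \<subseteq> S"
    and t: "t \<in> {t0..t1}"
  shows "gSL (vderiv {t0..t1} (\<lambda>t. osc_congr S c (\<phi> t)) t)
           = - ((vderiv {t0..t1} \<phi> t)^2 * \<kappa> (\<phi> t))"
proof -
  let ?T = "vderiv S c (\<phi> t)" and ?N = "(vderiv S ^^ 2) c (\<phi> t)" and ?d = "vderiv {t0..t1} \<phi> t"
  have "(\<phi> has_vector_derivative ?d) (at t within {t0..t1})"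
    using smooth_on_has_vector_derivative[OF \<phi>_smooth t, of 0] by simp
  moreover have "(osc_congr S c has_vector_derivative col_matrix ?N (- (\<kappa> (\<phi> t) *\<^sub>R ?T)))
                   (at (\<phi> t) within \<phi> ` {t0..t1})"
    using osc_congr_has_vector_derivative[OF smooth frame curvature] \<phi>_into t
    by (blast intro: has_vector_derivative_within_subset)
  ultimately have "((\<lambda>t. osc_congr S c (\<phi> t)) has_vector_derivative
                     ?d *\<^sub>R col_matrix ?N (- (\<kappa> (\<phi> t) *\<^sub>R ?T))) (at t within {t0..t1})"
    by (rule vector_diff_chain_within[unfolded o_def])
  then have "vderiv {t0..t1} (\<lambda>t. osc_congr S c (\<phi> t)) t
               = ?d *\<^sub>R col_matrix ?N (- (\<kappa> (\<phi> t) *\<^sub>R ?T))"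
    unfolding vderiv_def by (rule vector_derivative_within_closed_interval[OF \<open>t0 < t1\<close> t])
  moreover have "area ?T ?N = 1" using frame \<phi>_into t by blast
  ultimately show ?thesis
    by (simp add: gSL_def col_matrix_scaleR[symmetric] det_col_matrix area_def power2_eq_square
        algebra_simps)
qed

lemma continuous_nonvanishing_constant_sign:
  fixes d :: "real \<Rightarrow> real"
  assumes "connected S" and "continuous_on S d" and "\<forall>t\<in>S. d t \<noteq> 0"
  shows "(\<forall>t\<in>S. 0 < d t) \<or> (\<forall>t\<in>S. d t < 0)"
proof (rule ccontr)
  assume "\<not> ?thesis"
  then obtain x y where "x \<in> S" "y \<in> S" "d x < 0" "0 < d y"
    using assms(3) by (meson linorder_neqE_linordered_idom)
  moreover have "connected (d ` S)"
    using assms(1,2) by (simp add: connected_continuous_image)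
  ultimately have "0 \<in> d ` S"
    unfolding connected_iff_interval by (meson imageI less_imp_le)
  then show False using assms(3) by auto
qed

lemma mono_on_if_nonneg_vector_derivative:
  fixes f :: "real \<Rightarrow> real"
  assumes deriv: "\<And>t. t \<in> {a..b} \<Longrightarrow> (f has_vector_derivative f' t) (at t within {a..b})"
    and nonneg: "\<And>t. t \<in> {a..b} \<Longrightarrow> 0 \<le> f' t"
  shows "mono_on {a..b} f"
proof (rule mono_onI)
  fix x y assume "x \<in> {a..b}" "y \<in> {a..b}" "x \<le> y"
  then have sub: "{x..y} \<subseteq> {a..b}" by auto
  have "(f' has_integral (f y - f x)) {x..y}"
  proof (rule fundamental_theorem_of_calculus[OF \<open>x \<le> y\<close>])
    fix t assume "t \<in> {x..y}"
    then show "(f has_vector_derivative f' t) (at t within {x..y})"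
      using deriv sub by (blast intro: has_vector_derivative_within_subset)
  qed
  then have "0 \<le> f y - f x"
    using nonneg sub by (meson has_integral_nonneg subsetD)
  then show "f x \<le> f y" by simp
qed

lemma mono_on_interval_image_endpoints:
  fixes f :: "real \<Rightarrow> real"
  assumes "mono_on {a..b} f" and "f ` {a..b} = {c..d}" and "a \<le> b"
  shows "f a = c" and "f b = d"
proof -
  have "f a \<in> {c..d}" "f b \<in> {c..d}" using assms(2,3) by auto
  moreover have "c \<in> f ` {a..b}" "d \<in> f ` {a..b}" using assms(2) calculation by auto
  ultimately show "f a = c" "f b = d"
    using assms(1,3) by (auto simp: mono_on_def intro!: order.antisym)
qed

lemma has_integral_reparametrisation_abs:
  fixes \<phi> \<phi>' f :: "real \<Rightarrow> real"
  assumes "t0 \<le> t1"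
    and deriv: "\<And>t. t \<in> {t0..t1} \<Longrightarrow> (\<phi> has_vector_derivative \<phi>' t) (at t within {t0..t1})"
    and "continuous_on {t0..t1} \<phi>'" and "\<forall>t\<in>{t0..t1}. \<phi>' t \<noteq> 0"
    and onto: "\<phi> ` {t0..t1} = {s0..s1}" and "continuous_on {s0..s1} f"
  shows "((\<lambda>t. \<bar>\<phi>' t\<bar> * f (\<phi> t)) has_integral integral {s0..s1} f) {t0..t1}"
proof -
  have "continuous_on {t0..t1} \<phi>"
    using deriv by (meson continuous_on_eq_continuous_within has_vector_derivative_continuous)
  then have subst: "((\<lambda>t. \<phi>' t * f (\<phi> t)) has_integral
                       integral {\<phi> t0..\<phi> t1} f - integral {\<phi> t1..\<phi> t0} f) {t0..t1}"
    using has_integral_substitution_general[of "{}" t0 t1 \<phi> s0 s1 f \<phi>'] assms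
    by (simp add: has_real_derivative_iff_has_vector_derivative)
  have "\<phi> t0 \<in> {s0..s1}" using onto \<open>t0 \<le> t1\<close> by auto
  then have "s0 \<le> s1" by simp
  consider "\<forall>t\<in>{t0..t1}. 0 < \<phi>' t" | "\<forall>t\<in>{t0..t1}. \<phi>' t < 0"
    using continuous_nonvanishing_constant_sign[of "{t0..t1}" \<phi>'] assms(3,4) by auto
  then show ?thesis
  proof cases
    case 1
    then have "mono_on {t0..t1} \<phi>"
      using deriv by (intro mono_on_if_nonneg_vector_derivative) (auto intro: less_imp_le)
    then have "\<phi> t0 = s0" "\<phi> t1 = s1"
      using mono_on_interval_image_endpoints onto \<open>t0 \<le> t1\<close> by blast+
    with subst \<open>s0 \<le> s1\<close> have "((\<lambda>t. \<phi>' t * f (\<phi> t)) has_integral integral {s0..s1} f) {t0..t1}"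
      by (cases "s0 = s1") auto
    then show ?thesis
      by (rule has_integral_cong[THEN iffD1, rotated]) (use 1 in force)
  next
    case 2
    then have "mono_on {t0..t1} (\<lambda>t. - \<phi> t)"
      using deriv by (intro mono_on_if_nonneg_vector_derivative[where f' = "\<lambda>t. - \<phi>' t"])
        (auto intro: has_vector_derivative_minus less_imp_le)
    moreover have "(\<lambda>t. - \<phi> t) ` {t0..t1} = {- s1..- s0}"
      using onto by (simp add: image_image[of uminus \<phi>, symmetric])
    ultimately have "\<phi> t0 = s1" "\<phi> t1 = s0"
      using mono_on_interval_image_endpoints[of t0 t1 "\<lambda>t. - \<phi> t" "- s1" "- s0"] \<open>t0 \<le> t1\<close>
      by auto
    with has_integral_neg[OF subst] \<open>s0 \<le> s1\<close>
    have "((\<lambda>t. - (\<phi>' t * f (\<phi> t))) has_integral integral {s0..s1} f) {t0..t1}"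
      by (cases "s0 = s1") auto
    then show ?thesis
      by (rule has_integral_cong[THEN iffD1, rotated]) (use 2 in force)
  qed
qed

theorem mainTheorem6:
  fixes c :: "real \<Rightarrow> real^2" and \<kappa> :: "real \<Rightarrow> real" and \<phi> :: "real \<Rightarrow> real"
    and s0 s1 t0 t1 :: real
  assumes "s0 < s1" and "t0 < t1"
    and c_smooth: "smooth_on {s0..s1} c"
    and arclength: "\<forall>s\<in>{s0..s1}. area (vderiv {s0..s1} c s) ((vderiv {s0..s1} ^^ 2) c s) = 1"
    and curvature: "\<forall>s\<in>{s0..s1}.
        (vderiv {s0..s1} ^^ 3) c s = - (\<kappa> s *\<^sub>R vderiv {s0..s1} c s)"
    and kappa_pos: "\<forall>s\<in>{s0..s1}. \<kappa> s > 0"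
    and phi_smooth: "smooth_on {t0..t1} \<phi>"
    and phi_onto: "\<phi> ` {t0..t1} = {s0..s1}"
    and phi_regular: "\<forall>t\<in>{t0..t1}. vderiv {t0..t1} \<phi> t \<noteq> 0"
  shows "((\<lambda>t. sqrt \<bar>gSL (vderiv {t0..t1} (\<lambda>t'. osc_congr {s0..s1} c (\<phi> t')) t)\<bar>)
           has_integral (integral {s0..s1} (\<lambda>s. sqrt (\<kappa> s)))) {t0..t1}"
proof -
  have speed: "sqrt \<bar>gSL (vderiv {t0..t1} (\<lambda>t'. osc_congr {s0..s1} c (\<phi> t')) t)\<bar>
                 = \<bar>vderiv {t0..t1} \<phi> t\<bar> * sqrt (\<kappa> (\<phi> t))" if "t \<in> {t0..t1}" for t
  proof -
    have "\<kappa> (\<phi> t) > 0" using kappa_pos phi_onto that by blast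
    then show ?thesis
      using gSL_osc_congr_reparametrised[OF c_smooth arclength curvature \<open>t0 < t1\<close> phi_smooth]
        phi_onto that by (simp add: real_sqrt_mult)
  qed
  have "continuous_on {s0..s1} (\<lambda>s. sqrt (\<kappa> s))"
    using equiaffine_curvature_continuous_on[OF c_smooth arclength curvature]
    by (intro continuous_intros)
  moreover have "continuous_on {t0..t1} (vderiv {t0..t1} \<phi>)"
    using smooth_on_continuous_on[OF phi_smooth, of 1] by simp
  ultimately have "((\<lambda>t. \<bar>vderiv {t0..t1} \<phi> t\<bar> * sqrt (\<kappa> (\<phi> t)))
                     has_integral integral {s0..s1} (\<lambda>s. sqrt (\<kappa> s))) {t0..t1}"
    using smooth_on_has_vector_derivative[OF phi_smooth, of _ 0] \<open>t0 < t1\<close> phi_regular phi_onto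
    by (intro has_integral_reparametrisation_abs) auto
  then show ?thesis
    by (rule has_integral_cong[THEN iffD1, rotated]) (simp add: speed)
qed

end
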